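(* Let $b^{(1)},b^{(2)}\in Diag((\hbar))$ be constant. On families of pairwise commuting operators $L_\alpha=\partial/\partial x^\alpha-\hbar^{-1}C_\alpha(x)$, $\alpha=1,\dots,n$, admitting a dressing transformation $T$, consider the two flows $$\frac{\partial L_\alpha}{\partial t^i}=[M^{(i)}_{\le-1},L_\alpha],\qquad M^{(i)}=Tb^{(i)}T^{-1},\quad i=1,2.$$ These flows commute: computing mixed second derivatives by means of these equations, $\frac{\partial}{\partial t^1}\frac{\partial L_\alpha}{\partial t^2}=\frac{\partial}{\partial t^2}\frac{\partial L_\alpha}{\partial t^1}$ for all $\alpha$.
   Context: $C_\alpha$: $Mat(n,\mathbb C)$-valued analytic functions of $x$; $Diag$: diagonal matrices; $Diag((\hbar))$: formal Laurent series in $\hbar$ with diagonal coefficients. A dressing transformation is an invertible $T\in Mat(n,\mathbb C)[[\hbar]]$ with $T^{-1}L_\alpha T=\partial/\partial x^\alpha+h_\alpha$, $h_\alpha\in\hbar^{-1}Diag[[\hbar]]$ for all $\alpha$; it is assumed that the leading terms of $h_\alpha$ span $Diag$ (as in the semisimple Frobenius manifold setting), so $T$ is unique up to right multiplication by diagonal series and $M^{(i)}$ is well defined. For $v=\sum_lv_l\hbar^l$, $v_{\le k}=\sum_{l\le k}v_l\hbar^l$. $[\partial+A,M]=\partial M+[A,M]$; $\partial L_\alpha/\partial t$ means $-\hbar^{-1}\partial C_\alpha/\partial t$. In computing $\partial_{t^1}\partial_{t^2}L_\alpha$ one differentiates $[M^{(2)}_{\le-1},L_\alpha]$ along the $t^1$-flow,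 including the induced variation of $M^{(2)}$. *)

theory Defs
  imports "HOL-Analysis.Analysis"
begin

text \<open>
  The number n of coordinates x^1..x^n equals the matrix size n;
  both are indexed by a finite type 'n (so n = CARD('n)). An element of Mat(n, C_alpha) is a matrix-valued
  function complex^'n => complex^'n^'n, considered on an open set U.
  A formal Laurent series in hbar with such coefficients is a map
  int => (complex^'n => complex^'n^'n), the value at k being the coefficient of hbar^k.
\<close>

type_synonym 'n mfun = "complex^'n \<Rightarrow> complex^'n^'n"
type_synonym 'n lser = "int \<Rightarrow> 'n mfun"

definition mv_analytic_on :: "(complex^'n::finite \<Rightarrow> complex) \<Rightarrow> (complex^'n) set \<Rightarrow> bool" where
  "mv_analytic_on f U \<longleftrightarrow>
     (\<forall>x\<in>U. \<exists>r>0. \<exists>a :: ('n \<Rightarrow> nat) \<Rightarrow> complex.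
        \<forall>y\<in>ball x r. ((\<lambda>k. a k * (\<Prod>i\<in>UNIV. (y$i - x$i) ^ k i)) has_sum f y) UNIV)"

definition pdx :: "'n::finite \<Rightarrow> (complex^'n \<Rightarrow> complex) \<Rightarrow> complex^'n \<Rightarrow> complex" where
  "pdx \<alpha> f x = deriv (\<lambda>z. f (\<chi> i. if i = \<alpha> then z else x$i)) (x$\<alpha>)"

definition mderiv :: "'n::finite \<Rightarrow> 'n mfun \<Rightarrow> 'n mfun" where
  "mderiv \<alpha> F x = (\<chi> i j. pdx \<alpha> (\<lambda>y. F y $ i $ j) x)"

definition ser_analytic :: "(complex^'n::finite) set \<Rightarrow> 'n lser \<Rightarrow> bool" where
  "ser_analytic U A \<longleftrightarrow> (\<forall>k i j. mv_analytic_on (\<lambda>x. A k x $ i $ j) U)"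

definition lmul :: "'n::finite lser \<Rightarrow> 'n lser \<Rightarrow> 'n lser" where
  "lmul A B = (\<lambda>k x. \<Sum>\<^sub>\<infinity>i. A i x ** B (k - i) x)"

definition ladd :: "'n::finite lser \<Rightarrow> 'n lser \<Rightarrow> 'n lser" where
  "ladd A B = (\<lambda>k x. A k x + B k x)"

definition lsub :: "'n::finite lser \<Rightarrow> 'n lser \<Rightarrow> 'n lser" where
  "lsub A B = (\<lambda>k x. A k x - B k x)"

definition lone :: "'n::finite lser" where
  "lone = (\<lambda>k x. if k = 0 then mat 1 else 0)"

definition lbr :: "'n::finite lser \<Rightarrow> 'n lser \<Rightarrow> 'n lser" where
  "lbr A B = lsub (lmul A B) (lmul B A)"

definition ld :: "'n::finite \<Rightarrow> 'n lser \<Rightarrow> 'n lser" where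
  "ld \<alpha> A = (\<lambda>k. mderiv \<alpha> (A k))"

definition trunc :: "'n::finite lser \<Rightarrow> 'n lser" where
  "trunc A = (\<lambda>k x. if k \<le> -1 then A k x else 0)"

definition cser :: "(int \<Rightarrow> complex^'n^'n) \<Rightarrow> 'n::finite lser" where
  "cser b = (\<lambda>k x. b k)"

definition isdiag :: "complex^'n^'n \<Rightarrow> bool" where
  "isdiag D \<longleftrightarrow> (\<forall>i j. i \<noteq> j \<longrightarrow> D $ i $ j = 0)"

definition diag_laurent :: "(int \<Rightarrow> complex^'n^'n) \<Rightarrow> bool" where
  "diag_laurent b \<longleftrightarrow> (\<exists>N. \<forall>k<N. b k = 0) \<and> (\<forall>k. isdiag (b k))"

definition in_hdiag :: "(complex^'n::finite) set \<Rightarrow> 'n lser \<Rightarrow> bool" where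
  "in_hdiag U h \<longleftrightarrow> (\<forall>x\<in>U. (\<forall>k< -1. h k x = 0) \<and> (\<forall>k. isdiag (h k x)))"

definition power_ser :: "(complex^'n::finite) set \<Rightarrow> 'n lser \<Rightarrow> bool" where
  "power_ser U T \<longleftrightarrow> (\<forall>k<0. T k = (\<lambda>x. 0)) \<and> ser_analytic U T"

text \<open>Potential of L_alpha = d/dx^alpha - hbar^{-1} C_alpha: the series -hbar^{-1} C_alpha.\<close>
definition Lpot :: "('n::finite \<Rightarrow> 'n mfun) \<Rightarrow> 'n \<Rightarrow> 'n lser" where
  "Lpot C \<alpha> = (\<lambda>k x. if k = -1 then - C \<alpha> x else 0)"

text \<open>Pairwise commuting: [d_a + A_a, d_b + A_b] = d_a A_b - d_b A_a + [A_a, A_b] = 0.\<close>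
definition commuting_family :: "(complex^'n::finite) set \<Rightarrow> ('n \<Rightarrow> 'n mfun) \<Rightarrow> bool" where
  "commuting_family U C \<longleftrightarrow>
     (\<forall>\<alpha> \<beta>. \<forall>x\<in>U. \<forall>k.
        ladd (lsub (ld \<alpha> (Lpot C \<beta>)) (ld \<beta> (Lpot C \<alpha>))) (lbr (Lpot C \<alpha>) (Lpot C \<beta>)) k x = 0)"

text \<open>h_alpha with T^{-1} L_alpha T = d_alpha + h_alpha, namely
  h_alpha = T^{-1} d_alpha T + T^{-1} A_alpha T (Ti is T^{-1}).\<close>
definition hser :: "('n::finite \<Rightarrow> 'n mfun) \<Rightarrow> 'n lser \<Rightarrow> 'n lser \<Rightarrow> 'n \<Rightarrow> 'n lser" where
  "hser C T Ti \<alpha> = ladd (lmul Ti (ld \<alpha> T)) (lmul Ti (lmul (Lpot C \<alpha>) T))"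

text \<open>T is a dressing transformation with inverse Ti, and the leading terms of the
  h_alpha span Diag (pointwise on U, over the complex numbers).\<close>
definition dressing :: "(complex^'n::finite) set \<Rightarrow> ('n \<Rightarrow> 'n mfun) \<Rightarrow> 'n lser \<Rightarrow> 'n lser \<Rightarrow> bool" where
  "dressing U C T Ti \<longleftrightarrow>
     power_ser U T \<and> power_ser U Ti \<and>
     (\<forall>x\<in>U. \<forall>k. lmul T Ti k x = lone k x \<and> lmul Ti T k x = lone k x) \<and>
     (\<forall>\<alpha>. in_hdiag U (hser C T Ti \<alpha>))"

definition leading_span :: "(complex^'n::finite) set \<Rightarrow> ('n \<Rightarrow> 'n mfun) \<Rightarrow> 'n lser \<Rightarrow> 'n lser \<Rightarrow> bool" where
  "leading_span U C T Ti \<longleftrightarrow>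
     (\<forall>x\<in>U. \<forall>D. isdiag D \<longrightarrow>
        (\<exists>c :: 'n \<Rightarrow> complex. D = (\<chi> i j. \<Sum>\<alpha>\<in>UNIV. c \<alpha> * hser C T Ti \<alpha> (-1) x $ i $ j)))"

definition Mser :: "'n::finite lser \<Rightarrow> 'n lser \<Rightarrow> (int \<Rightarrow> complex^'n^'n) \<Rightarrow> 'n lser" where
  "Mser T Ti b = lmul (lmul T (cser b)) Ti"

text \<open>Right-hand side of the flow: [M_{<=-1}, L_alpha] = -d_alpha M_{<=-1} + [M_{<=-1}, A_alpha],
  using the convention [d + A, M] = dM + [A, M].\<close>
definition flowL :: "('n::finite \<Rightarrow> 'n mfun) \<Rightarrow> 'n lser \<Rightarrow> 'n \<Rightarrow> 'n lser" where
  "flowL C M \<alpha> = ladd (lsub (\<lambda>k x. 0) (ld \<alpha> (trunc M))) (lbr (trunc M) (Lpot C \<alpha>))"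

text \<open>Induced first-order variation of the dressing: dT is a variation of T in
  Mat(n,C_alpha)[[hbar]] such that, when the potentials vary by dA_alpha (variation of
  L_alpha), T + eps dT still dresses L + eps dL to first order, i.e. the variation
  of h_alpha = T^{-1} d_alpha T + T^{-1} A_alpha T stays in hbar^{-1} Diag[[hbar]].
  (The variation of T^{-1} is -T^{-1} dT T^{-1}.)\<close>
definition var_h :: "('n::finite \<Rightarrow> 'n mfun) \<Rightarrow> 'n lser \<Rightarrow> 'n lser \<Rightarrow> 'n lser \<Rightarrow> ('n \<Rightarrow> 'n lser) \<Rightarrow> 'n \<Rightarrow> 'n lser" where
  "var_h C T Ti dT dA \<alpha> =
     ladd (ladd (ladd (ladd
       (lsub (\<lambda>k x. 0) (lmul (lmul (lmul Ti dT) Ti) (ld \<alpha> T)))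
       (lmul Ti (ld \<alpha> dT)))
       (lsub (\<lambda>k x. 0) (lmul (lmul (lmul (lmul Ti dT) Ti) (Lpot C \<alpha>)) T)))
       (lmul (lmul Ti (dA \<alpha>)) T))
       (lmul (lmul Ti (Lpot C \<alpha>)) dT)"

definition dressing_variation ::
  "(complex^'n::finite) set \<Rightarrow> ('n \<Rightarrow> 'n mfun) \<Rightarrow> 'n lser \<Rightarrow> 'n lser \<Rightarrow> ('n \<Rightarrow> 'n lser) \<Rightarrow> 'n lser \<Rightarrow> bool" where
  "dressing_variation U C T Ti dA dT \<longleftrightarrow>
     power_ser U dT \<and> (\<forall>\<alpha>. in_hdiag U (var_h C T Ti dT dA \<alpha>))"

definition var_M :: "'n::finite lser \<Rightarrow> 'n lser \<Rightarrow> (int \<Rightarrow> complex^'n^'n) \<Rightarrow> 'n lser \<Rightarrow> 'n lser" where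
  "var_M T Ti b dT = lsub (lmul (lmul dT (cser b)) Ti) (lmul (lmul (Mser T Ti b) dT) Ti)"

text \<open>d/dt^i (d L_alpha / dt^j), computed from the flow equations:
  [ (dM^{(j)})_{<=-1}, L_alpha ] + [ M^{(j)}_{<=-1}, dL_alpha/dt^i ],
  where dM^{(j)} is the variation of M^{(j)} induced by the variation dT of T along t^i.\<close>
definition mixed_second ::
  "('n::finite \<Rightarrow> 'n mfun) \<Rightarrow> 'n lser \<Rightarrow> 'n lser \<Rightarrow> (int \<Rightarrow> complex^'n^'n) \<Rightarrow> (int \<Rightarrow> complex^'n^'n)
    \<Rightarrow> 'n lser \<Rightarrow> 'n \<Rightarrow> 'n lser" where
  "mixed_second C T Ti bi bj dTi \<alpha> =
     ladd (flowL C (var_M T Ti bj dTi) \<alpha>)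
          (lbr (trunc (Mser T Ti bj)) (flowL C (Mser T Ti bi) \<alpha>))"

end

theory Submission
  imports Defs "HOL-Computational_Algebra.Formal_Laurent_Series"
begin

text \<open>
  Write \<open>M\<^sub>j = T b\<^sub>j T\<inverse>\<close> and \<open>N\<^sub>-\<close> for the truncation \<open>N\<^sub>\<le>\<^sub>-\<^sub>1\<close>. At a fixed point, a series
  in \<open>\<hbar>\<close> that is bounded below is a formal Laurent series over the ring of matrices; products,
  brackets and \<open>\<partial>\<^sub>\<alpha>\<close> (a derivation) become ring operations there, and \<open>N \<mapsto> N\<^sub>-\<close> becomes the
  projection \<open>P\<close> onto principal parts.

  Along the \<open>i\<close>-th flow the dressing varies as \<open>\<delta>T = (M\<^sub>i)\<^sub>- T + T X\<close>, and the induced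
  variation of \<open>h\<^sub>\<alpha>\<close> is \<open>[h\<^sub>\<alpha>, X] + \<partial>\<^sub>\<alpha>X\<close>. It must stay diagonal, and the leading terms
  of the \<open>h\<^sub>\<alpha>\<close> separate the diagonal entries, so by induction on the order in \<open>\<hbar>\<close> the
  series \<open>X\<close> is diagonal. Hence \<open>X\<close> commutes with \<open>b\<^sub>j\<close> and \<open>\<delta>\<^sub>iM\<^sub>j = [(M\<^sub>i)\<^sub>-, M\<^sub>j]\<close>.

  The \<open>M\<^sub>j\<close> commute, being conjugates of commuting diagonal series, and \<open>P\<close> is a
  Rota--Baxter operator: \<open>P(fg) = P(Pf g) + P(f Pg) - Pf Pg\<close>. These two facts turn the
  difference of the mixed derivatives into a Jacobi identity.
\<close>

section \<open>Square matrices as a ring\<close>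

typedef ('a, 'n) sqmat = "UNIV :: ('a^'n^'n) set"
  by simp

lemma matrix_add_rdistrib: "(B + C) ** A = B ** A + C ** A"
  by (vector matrix_matrix_mult_def sum.distrib[symmetric] field_simps)

instantiation sqmat :: (ring_1, finite) ring_1
begin

definition "0 = Abs_sqmat 0"
definition "1 = Abs_sqmat (mat 1)"
definition "a + b = Abs_sqmat (Rep_sqmat a + Rep_sqmat b)"
definition "a - b = Abs_sqmat (Rep_sqmat a - Rep_sqmat b)"
definition "- a = Abs_sqmat (- Rep_sqmat a)"
definition "a * b = Abs_sqmat (Rep_sqmat a ** Rep_sqmat b)"

instance
proof
  fix a b c :: "('a, 'b) sqmat"
  show "a * b * c = a * (b * c)"
    by (simp add: times_sqmat_def Abs_sqmat_inverse matrix_mul_assoc)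
  show "1 * a = a" "a * 1 = a"
    by (simp_all add: times_sqmat_def one_sqmat_def Abs_sqmat_inverse Rep_sqmat_inverse)
  show "a + b + c = a + (b + c)"
    by (simp add: plus_sqmat_def Abs_sqmat_inverse add.assoc)
  show "a + b = b + a"
    by (simp add: plus_sqmat_def add.commute)
  show "0 + a = a"
    by (simp add: plus_sqmat_def zero_sqmat_def Abs_sqmat_inverse Rep_sqmat_inverse)
  show "- a + a = 0"
    by (simp add: plus_sqmat_def zero_sqmat_def uminus_sqmat_def Abs_sqmat_inverse)
  show "a - b = a + - b"
    by (simp add: plus_sqmat_def minus_sqmat_def uminus_sqmat_def Abs_sqmat_inverse)
  show "(a + b) * c = a * c + b * c"
    by (simp add: plus_sqmat_def times_sqmat_def Abs_sqmat_inverse matrix_add_rdistrib)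
  show "a * (b + c) = a * b + a * c"
    by (simp add: plus_sqmat_def times_sqmat_def Abs_sqmat_inverse matrix_add_ldistrib)
  have "(0 :: 'a^'b^'b) $ i $ i \<noteq> mat 1 $ i $ i" for i
    by (simp add: mat_def)
  then show "(0 :: ('a, 'b) sqmat) \<noteq> 1"
    by (metis zero_sqmat_def one_sqmat_def Abs_sqmat_inject UNIV_I)
qed

end

lemma Abs_sqmat_simps:
  "Abs_sqmat (A ** B) = Abs_sqmat A * Abs_sqmat B"
  "Abs_sqmat (A + B) = Abs_sqmat A + Abs_sqmat B"
  "Abs_sqmat (A - B) = Abs_sqmat A - Abs_sqmat B"
  "Abs_sqmat 0 = 0"
  "Abs_sqmat (mat 1) = 1"
  by (simp_all add: times_sqmat_def plus_sqmat_def minus_sqmat_def zero_sqmat_def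
      one_sqmat_def Abs_sqmat_inverse)

lemma Abs_sqmat_sum: "Abs_sqmat (sum f S) = (\<Sum>i\<in>S. Abs_sqmat (f i))"
  by (induction S rule: infinite_finite_induct) (simp_all add: Abs_sqmat_simps)

lemma Abs_sqmat_eq_iff: "Abs_sqmat A = Abs_sqmat B \<longleftrightarrow> A = B"
  by (simp add: Abs_sqmat_inject)

lemma isdiag_mult_left:
  assumes "isdiag A"
  shows "(A ** B) $ i $ j = A $ i $ i * B $ i $ j"
proof -
  have "(A ** B) $ i $ j = (\<Sum>l\<in>UNIV. A $ i $ l * B $ l $ j)"
    by (simp add: matrix_matrix_mult_def)
  also have "\<dots> = (\<Sum>l\<in>UNIV. if l = i then A $ i $ l * B $ l $ j else 0)"
    by (rule sum.cong) (use assms in \<open>auto simp: isdiag_def\<close>)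
  finally show ?thesis by simp
qed

lemma isdiag_mult_right:
  assumes "isdiag B"
  shows "(A ** B) $ i $ j = A $ i $ j * B $ j $ j"
proof -
  have "(A ** B) $ i $ j = (\<Sum>l\<in>UNIV. A $ i $ l * B $ l $ j)"
    by (simp add: matrix_matrix_mult_def)
  also have "\<dots> = (\<Sum>l\<in>UNIV. if l = j then A $ i $ l * B $ l $ j else 0)"
    by (rule sum.cong) (use assms in \<open>auto simp: isdiag_def\<close>)
  finally show ?thesis by simp
qed

lemma isdiag_mult_commute:
  assumes "isdiag A" "isdiag B"
  shows "A ** B = B ** A"
proof -
  have "(A ** B) $ i $ j = (B ** A) $ i $ j" for i j
    using assms by (cases "i = j") (simp_all add: isdiag_mult_left isdiag_def mult.commute)
  then show ?thesis by (simp add: vec_eq_iff)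
qed


section \<open>Laurent series evaluated at a point\<close>

unbundle fps_syntax

lemma fls_times_nth_bounded:
  fixes f g :: "'a::ring fls"
  assumes "\<And>i. i < a \<Longrightarrow> f $$ i = 0" and "\<And>j. j < b \<Longrightarrow> g $$ j = 0"
  shows "(f * g) $$ n = (\<Sum>i=a..n-b. f $$ i * g $$ (n - i))"
proof (cases "f = 0 \<or> g = 0")
  case True
  then show ?thesis by auto
next
  case False
  then have le: "a \<le> fls_subdegree f" "b \<le> fls_subdegree g"
    using fls_subdegree_geI assms by blast+
  have "(f * g) $$ n = (\<Sum>i=fls_subdegree f..n - fls_subdegree g. f $$ i * g $$ (n - i))"
    by (rule fls_times_nth(2))
  also have "\<dots> = (\<Sum>i=a..n-b. f $$ i * g $$ (n - i))"
    by (rule sum.mono_neutral_left) (use le in auto)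
  finally show ?thesis .
qed

definition vanishes_below :: "'n::finite lser \<Rightarrow> int \<Rightarrow> bool" where
  "vanishes_below A N \<longleftrightarrow> (\<forall>k<N. \<forall>y. A k y = 0)"

definition bounded_below :: "'n::finite lser \<Rightarrow> bool" where
  "bounded_below A \<longleftrightarrow> (\<exists>N. vanishes_below A N)"

lemma lmul_eq_sum:
  assumes "vanishes_below A a" "vanishes_below B b"
  shows "lmul A B k x = (\<Sum>i=a..k-b. A i x ** B (k-i) x)"
proof -
  have "lmul A B k x = (\<Sum>\<^sub>\<infinity>i\<in>{a..k-b}. A i x ** B (k-i) x)"
    unfolding lmul_def using assms
    by (intro infsum_cong_neutral) (auto simp: vanishes_below_def not_le)
  then show ?thesis by simp
qed

lemma lmul_eq_sum_flip:
  assumes "vanishes_below A a" "vanishes_below B b"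
  shows "lmul A B k x = (\<Sum>l=b..k-a. A (k-l) x ** B l x)"
  unfolding lmul_eq_sum[OF assms]
  by (rule sum.reindex_bij_witness[of _ "\<lambda>l. k - l" "\<lambda>i. k - i"]) auto

text \<open>\<open>Abs_fls\<close> is unspecified on sequences that are not bounded below, so \<open>fls_at\<close> is
  only meaningful on \<open>bounded_below\<close> series.\<close>

definition fls_at :: "'n::finite lser \<Rightarrow> complex^'n \<Rightarrow> (complex, 'n) sqmat fls" where
  "fls_at A x = Abs_fls (\<lambda>k. Abs_sqmat (A k x))"

lemma fls_at_nth:
  assumes "vanishes_below A N"
  shows "fls_at A x $$ k = Abs_sqmat (A k x)"
  unfolding fls_at_def
proof (rule nth_Abs_fls_ex_nat_lower_bound)
  show "\<exists>m. \<forall>n>m. Abs_sqmat (A (- int n) x) = 0"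
    using assms by (intro exI[of _ "nat (- N)"]) (auto simp: vanishes_below_def Abs_sqmat_simps)
qed

lemma fls_at_cong: "(\<And>k. A k x = B k x) \<Longrightarrow> fls_at A x = fls_at B x"
  by (simp add: fls_at_def)

lemma fls_at_eqD:
  assumes "bounded_below A" "bounded_below B" "fls_at A x = fls_at B x"
  shows "A k x = B k x"
proof -
  obtain a b where "vanishes_below A a" "vanishes_below B b"
    using assms(1,2) by (auto simp: bounded_below_def)
  then show ?thesis
    using arg_cong[OF assms(3), of "\<lambda>f. f $$ k"] by (simp add: fls_at_nth Abs_sqmat_eq_iff)
qed

lemma vanishes_below_lmul:
  "vanishes_below A a \<Longrightarrow> vanishes_below B b \<Longrightarrow> vanishes_below (lmul A B) (a + b)"
proof -
  assume ab: "vanishes_below A a" "vanishes_below B b"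
  show ?thesis
    unfolding vanishes_below_def lmul_eq_sum[OF ab] by simp
qed

lemma bounded_below_lmul [simp]:
  "bounded_below A \<Longrightarrow> bounded_below B \<Longrightarrow> bounded_below (lmul A B)"
  unfolding bounded_below_def using vanishes_below_lmul by blast

lemma vanishes_below_mono: "vanishes_below A N \<Longrightarrow> M \<le> N \<Longrightarrow> vanishes_below A M"
  by (simp add: vanishes_below_def)

lemma bounded_below_ladd [simp]:
  assumes "bounded_below A" "bounded_below B"
  shows "bounded_below (ladd A B)"
proof -
  obtain a b where "vanishes_below A a" "vanishes_below B b"
    using assms by (auto simp: bounded_below_def)
  then have "vanishes_below (ladd A B) (min a b)"
    by (simp add: vanishes_below_def ladd_def)
  then show ?thesis by (auto simp: bounded_below_def)
qed

lemma bounded_below_lsub [simp]: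
  assumes "bounded_below A" "bounded_below B"
  shows "bounded_below (lsub A B)"
proof -
  obtain a b where "vanishes_below A a" "vanishes_below B b"
    using assms by (auto simp: bounded_below_def)
  then have "vanishes_below (lsub A B) (min a b)"
    by (simp add: vanishes_below_def lsub_def)
  then show ?thesis by (auto simp: bounded_below_def)
qed

lemma bounded_below_lbr [simp]:
  "bounded_below A \<Longrightarrow> bounded_below B \<Longrightarrow> bounded_below (lbr A B)"
  by (simp add: lbr_def)

lemma bounded_below_trunc [simp]: "bounded_below A \<Longrightarrow> bounded_below (trunc A)"
  unfolding bounded_below_def vanishes_below_def trunc_def by auto

lemma bounded_below_zero [simp]: "bounded_below (\<lambda>k x. 0)"
  by (auto simp: bounded_below_def vanishes_below_def)

lemma bounded_below_Lpot [simp]: "bounded_below (Lpot C \<alpha>)"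
  by (auto simp: bounded_below_def vanishes_below_def Lpot_def intro: exI[of _ "-1"])

lemma bounded_below_cser: "diag_laurent b \<Longrightarrow> bounded_below (cser b)"
  by (auto simp: bounded_below_def vanishes_below_def diag_laurent_def cser_def)

lemma bounded_below_power_ser: "power_ser U A \<Longrightarrow> bounded_below A"
  unfolding bounded_below_def vanishes_below_def power_ser_def by (metis zero_less_iff_neq_zero)

lemma fls_at_lmul [simp]:
  assumes "bounded_below A" "bounded_below B"
  shows "fls_at (lmul A B) x = fls_at A x * fls_at B x"
proof -
  obtain a b where ab: "vanishes_below A a" "vanishes_below B b"
    using assms by (auto simp: bounded_below_def)
  show ?thesis
  proof (rule fls_eqI)
    fix k
    have "fls_at (lmul A B) x $$ k = (\<Sum>i=a..k-b. fls_at A x $$ i * fls_at B x $$ (k-i))"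
      by (simp add: fls_at_nth[OF vanishes_below_lmul[OF ab]] fls_at_nth[OF ab(1)]
          fls_at_nth[OF ab(2)] lmul_eq_sum[OF ab] Abs_sqmat_sum Abs_sqmat_simps)
    also have "\<dots> = (fls_at A x * fls_at B x) $$ k"
      using ab by (intro fls_times_nth_bounded[symmetric])
        (simp_all add: fls_at_nth vanishes_below_def Abs_sqmat_simps)
    finally show "fls_at (lmul A B) x $$ k = (fls_at A x * fls_at B x) $$ k" .
  qed
qed

lemma fls_at_ladd [simp]:
  assumes "bounded_below A" "bounded_below B"
  shows "fls_at (ladd A B) x = fls_at A x + fls_at B x"
  using assms bounded_below_ladd[OF assms]
  by (intro fls_eqI) (auto simp: bounded_below_def fls_at_nth ladd_def Abs_sqmat_simps)

lemma fls_at_lsub [simp]: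
  assumes "bounded_below A" "bounded_below B"
  shows "fls_at (lsub A B) x = fls_at A x - fls_at B x"
  using assms bounded_below_lsub[OF assms]
  by (intro fls_eqI) (auto simp: bounded_below_def fls_at_nth lsub_def Abs_sqmat_simps)

lemma fls_at_mult_commute_isdiag:
  assumes "bounded_below A" "bounded_below B" "\<And>k. isdiag (A k x)" "\<And>k. isdiag (B k x)"
  shows "fls_at A x * fls_at B x = fls_at B x * fls_at A x"
proof -
  obtain a b where ab: "vanishes_below A a" "vanishes_below B b"
    using assms(1,2) by (auto simp: bounded_below_def)
  have "lmul A B k x = lmul B A k x" for k
    unfolding lmul_eq_sum[OF ab] lmul_eq_sum_flip[OF ab(2,1)]
    by (rule sum.cong) (auto intro: isdiag_mult_commute assms(3,4))
  then have "fls_at (lmul A B) x = fls_at (lmul B A) x"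
    by (rule fls_at_cong)
  then show ?thesis
    using assms(1,2) by simp
qed

definition commutator :: "'a::ring \<Rightarrow> 'a \<Rightarrow> 'a" where
  "commutator f g = f * g - g * f"

lemma fls_at_lbr [simp]:
  "bounded_below A \<Longrightarrow> bounded_below B \<Longrightarrow> fls_at (lbr A B) x = commutator (fls_at A x) (fls_at B x)"
  by (simp add: lbr_def commutator_def)

lemma fls_at_zero [simp]: "fls_at (\<lambda>k x. 0) x = 0"
proof -
  have "vanishes_below (\<lambda>k x. 0) 0" by (simp add: vanishes_below_def)
  from fls_at_nth[OF this] show ?thesis by (intro fls_eqI) (simp add: Abs_sqmat_simps)
qed

lemma fls_at_lone [simp]: "fls_at lone x = 1"
proof -
  have "vanishes_below lone 0" by (simp add: vanishes_below_def lone_def)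
  from fls_at_nth[OF this, of x] show ?thesis
    by (intro fls_eqI) (simp add: lone_def Abs_sqmat_simps split: if_split_asm)
qed


section \<open>The principal part of a Laurent series\<close>

definition fls_principal :: "'a::ring_1 fls \<Rightarrow> 'a fls" where
  "fls_principal f = f - fls_regpart_as_fls f"

lemma fls_principal_nth [simp]: "fls_principal f $$ k = (if k < 0 then f $$ k else 0)"
  by (simp add: fls_principal_def)

lemma fls_principal_add [simp]: "fls_principal (f + g) = fls_principal f + fls_principal g"
  and fls_principal_diff [simp]: "fls_principal (f - g) = fls_principal f - fls_principal g"
  and fls_principal_uminus [simp]: "fls_principal (- f) = - fls_principal f"
  and fls_principal_zero [simp]: "fls_principal 0 = 0"
  by (auto intro: fls_eqI)

lemma fls_principal_mult_principal:
  "fls_principal (fls_principal f * fls_principal g) = fls_principal f * fls_principal g"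
proof (rule fls_eqI)
  fix k :: int
  have "(fls_principal f * fls_principal g) $$ k = 0" if "k \<ge> 0"
    unfolding fls_times_nth(2) by (rule sum.neutral) (use that in auto)
  then show "fls_principal (fls_principal f * fls_principal g) $$ k
      = (fls_principal f * fls_principal g) $$ k"
    by simp
qed

lemma fls_principal_mult_regular:
  "fls_principal ((f - fls_principal f) * (g - fls_principal g)) = 0"
proof -
  have "(f - fls_principal f) * (g - fls_principal g) = fps_to_fls (fls_regpart f * fls_regpart g)"
    by (simp add: fls_principal_def fls_times_fps_to_fls)
  then show ?thesis by (intro fls_eqI) simp
qed

text \<open>The projection onto principal parts is a Rota--Baxter operator of weight \<open>-1\<close>.\<close>

lemma fls_principal_mult:
  "fls_principal (f * g) = fls_principal (fls_principal f * g) + fls_principal (f * fls_principal g)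
     - fls_principal f * fls_principal g"
proof -
  define p q where "p = fls_principal f" and "q = fls_principal g"
  have "f * g = p * q + p * (g - q) + (f - p) * q + (f - p) * (g - q)"
    by (simp add: algebra_simps)
  moreover have "fls_principal f * g = p * q + p * (g - q)"
    and "f * fls_principal g = p * q + (f - p) * q"
    by (simp_all add: p_def q_def algebra_simps)
  ultimately show ?thesis
    using fls_principal_mult_principal[of f g] fls_principal_mult_regular[of f g]
    by (simp add: p_def q_def)
qed

lemma fls_at_trunc [simp]:
  assumes "bounded_below A"
  shows "fls_at (trunc A) x = fls_principal (fls_at A x)"
proof -
  obtain a where a: "vanishes_below A a"
    using assms by (auto simp: bounded_below_def)
  then have "vanishes_below (trunc A) a"
    by (simp add: vanishes_below_def trunc_def)
  then show ?thesis
    by (intro fls_eqI) (simp add: fls_at_nth[OF a] fls_at_nth trunc_def Abs_sqmat_simps)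
qed


section \<open>Partial derivatives\<close>

definition coord_upd :: "complex^'n \<Rightarrow> 'n::finite \<Rightarrow> complex \<Rightarrow> complex^'n" where
  "coord_upd x \<alpha> z = (\<chi> i. if i = \<alpha> then z else x$i)"

lemma coord_upd_self [simp]: "coord_upd x \<alpha> (x$\<alpha>) = x"
  by (simp add: coord_upd_def vec_eq_iff)

lemma dist_coord_upd: "dist (coord_upd x \<alpha> z) x \<le> dist z (x$\<alpha>)"
proof -
  have "dist (coord_upd x \<alpha> z) x = L2_set (\<lambda>i. cmod ((coord_upd x \<alpha> z - x)$i)) UNIV"
    by (simp add: dist_norm norm_vec_def)
  also have "\<dots> \<le> (\<Sum>i\<in>UNIV. cmod ((coord_upd x \<alpha> z - x)$i))"
    by (rule L2_set_le_sum) simp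
  also have "\<dots> = (\<Sum>i\<in>UNIV. if i = \<alpha> then dist z (x$\<alpha>) else 0)"
    by (rule sum.cong) (auto simp: coord_upd_def dist_norm)
  finally show ?thesis by simp
qed

lemma pdx_coord_upd: "pdx \<alpha> f x = deriv (\<lambda>z. f (coord_upd x \<alpha> z)) (x$\<alpha>)"
  by (simp add: pdx_def coord_upd_def)

definition has_partials :: "(complex^'n::finite \<Rightarrow> complex) \<Rightarrow> complex^'n \<Rightarrow> bool" where
  "has_partials f x \<longleftrightarrow> (\<forall>\<alpha>. (\<lambda>z. f (coord_upd x \<alpha> z)) field_differentiable (at (x$\<alpha>)))"

lemma has_partials_DERIV:
  "has_partials f x \<Longrightarrow> ((\<lambda>z. f (coord_upd x \<alpha> z)) has_field_derivative pdx \<alpha> f x) (at (x$\<alpha>))"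
  by (simp add: has_partials_def pdx_coord_upd DERIV_deriv_iff_field_differentiable)

lemma has_partialsI:
  "(\<And>\<alpha>. ((\<lambda>z. f (coord_upd x \<alpha> z)) has_field_derivative D \<alpha>) (at (x$\<alpha>))) \<Longrightarrow> has_partials f x"
  by (auto simp: has_partials_def field_differentiable_def)

lemma has_partials_const: "has_partials (\<lambda>y. c) x"
  by (rule has_partialsI, rule DERIV_const)

lemma has_partials_add: "has_partials f x \<Longrightarrow> has_partials g x \<Longrightarrow> has_partials (\<lambda>y. f y + g y) x"
  by (rule has_partialsI, rule DERIV_add) (erule has_partials_DERIV)+

lemma has_partials_diff: "has_partials f x \<Longrightarrow> has_partials g x \<Longrightarrow> has_partials (\<lambda>y. f y - g y) x"
  by (rule has_partialsI, rule DERIV_diff) (erule has_partials_DERIV)+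

lemma has_partials_mult: "has_partials f x \<Longrightarrow> has_partials g x \<Longrightarrow> has_partials (\<lambda>y. f y * g y) x"
  by (rule has_partialsI, rule DERIV_mult') (erule has_partials_DERIV)+

lemma has_partials_sum:
  "finite S \<Longrightarrow> (\<And>i. i \<in> S \<Longrightarrow> has_partials (f i) x) \<Longrightarrow> has_partials (\<lambda>y. \<Sum>i\<in>S. f i y) x"
  by (induction S rule: finite_induct) (auto intro: has_partials_add has_partials_const)

lemma pdx_const: "pdx \<alpha> (\<lambda>y. c) x = 0"
  unfolding pdx_coord_upd by simp

lemma pdx_add:
  "has_partials f x \<Longrightarrow> has_partials g x \<Longrightarrow> pdx \<alpha> (\<lambda>y. f y + g y) x = pdx \<alpha> f x + pdx \<alpha> g x"
  unfolding pdx_coord_upd[of \<alpha> "\<lambda>y. f y + g y"]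
  by (rule DERIV_imp_deriv, rule DERIV_add) (erule has_partials_DERIV)+

lemma pdx_diff:
  "has_partials f x \<Longrightarrow> has_partials g x \<Longrightarrow> pdx \<alpha> (\<lambda>y. f y - g y) x = pdx \<alpha> f x - pdx \<alpha> g x"
  unfolding pdx_coord_upd[of \<alpha> "\<lambda>y. f y - g y"]
  by (rule DERIV_imp_deriv, rule DERIV_diff) (erule has_partials_DERIV)+

lemma pdx_mult:
  assumes "has_partials f x" "has_partials g x"
  shows "pdx \<alpha> (\<lambda>y. f y * g y) x = f x * pdx \<alpha> g x + pdx \<alpha> f x * g x"
  using DERIV_imp_deriv[OF DERIV_mult'[OF assms[THEN has_partials_DERIV[of _ x \<alpha>]]]]
  by (simp add: pdx_coord_upd[of \<alpha> "\<lambda>y. f y * g y"])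

lemma pdx_sum:
  "finite S \<Longrightarrow> (\<And>i. i \<in> S \<Longrightarrow> has_partials (f i) x) \<Longrightarrow>
    pdx \<alpha> (\<lambda>y. \<Sum>i\<in>S. f i y) x = (\<Sum>i\<in>S. pdx \<alpha> (f i) x)"
  by (induction S rule: finite_induct) (simp_all add: pdx_const pdx_add has_partials_sum)

lemma pdx_local:
  assumes "open U" "x \<in> U" "\<And>y. y \<in> U \<Longrightarrow> f y = g y"
  shows "pdx \<alpha> f x = pdx \<alpha> g x"
proof -
  obtain e where e: "e > 0" "ball x e \<subseteq> U"
    using assms(1,2) open_contains_ball by blast
  have "coord_upd x \<alpha> z \<in> U" if "z \<in> ball (x$\<alpha>) e" for z
    using that e dist_coord_upd[of x \<alpha> z] by (auto simp: dist_commute)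
  then have "\<forall>\<^sub>F z in nhds (x$\<alpha>). f (coord_upd x \<alpha> z) = g (coord_upd x \<alpha> z)"
    using e(1) assms(3) by (intro eventually_nhds_in_open[of "ball (x$\<alpha>) e", THEN eventually_mono]) auto
  then show ?thesis
    unfolding pdx_coord_upd by (rule deriv_cong_ev) simp
qed

lemma mv_analytic_on_coord_sums:
  assumes "mv_analytic_on f U" "x \<in> U"
  obtains r c where "r > 0"
    "\<And>w. cmod w < r \<Longrightarrow> (\<lambda>n. c n * w ^ n) sums f (coord_upd x \<alpha> (x$\<alpha> + w))"
proof -
  obtain r a where r: "r > 0" and hs: "\<And>y. y \<in> ball x r \<Longrightarrow>
      ((\<lambda>k. a k * (\<Prod>i\<in>UNIV. (y$i - x$i) ^ k i)) has_sum f y) UNIV"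
    using assms unfolding mv_analytic_on_def by blast
  define e :: "nat \<Rightarrow> 'a \<Rightarrow> nat" where "e n = (\<lambda>i. if i = \<alpha> then n else 0)" for n
  have "inj e"
    unfolding e_def inj_def by (metis (full_types))
  have "(\<lambda>n. a (e n) * w ^ n) sums f (coord_upd x \<alpha> (x$\<alpha> + w))" if w: "cmod w < r" for w
  proof -
    define y where "y = coord_upd x \<alpha> (x$\<alpha> + w)"
    define g where "g k = a k * (\<Prod>i\<in>UNIV. (y$i - x$i) ^ k i)" for k
    have y_minus_x: "y$i - x$i = (if i = \<alpha> then w else 0)" for i
      by (simp add: y_def coord_upd_def)
    have "y \<in> ball x r"
      using w dist_coord_upd[of x \<alpha> "x$\<alpha> + w"] by (simp add: y_def dist_commute dist_norm)
    then have hs_univ: "(g has_sum f y) UNIV"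
      unfolding g_def by (rule hs)
    have outside: "g k = 0" if "k \<notin> range e" for k
    proof -
      from that have "k \<noteq> e (k \<alpha>)" by auto
      then obtain i where "k i \<noteq> e (k \<alpha>) i" by auto
      then have "i \<noteq> \<alpha>" "k i \<noteq> 0" by (auto simp: e_def split: if_splits)
      then have "(y$i - x$i) ^ k i = 0"
        by (simp add: y_minus_x)
      then have "(\<Prod>i\<in>UNIV. (y$i - x$i) ^ k i) = 0"
        by (meson UNIV_I finite prod_zero)
      then show ?thesis
        by (simp add: g_def)
    qed
    have "(g has_sum f y) (range e)"
      using hs_univ by (rule has_sum_cong_neutral[THEN iffD1, rotated -1]) (auto simp: outside)
    then have "((g \<circ> e) has_sum f y) UNIV"
      by (simp add: has_sum_reindex[OF \<open>inj e\<close>])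
    moreover have "(g \<circ> e) n = a (e n) * w ^ n" for n
    proof -
      have "(\<Prod>i\<in>UNIV. (y$i - x$i) ^ e n i) = (\<Prod>i\<in>UNIV. if i = \<alpha> then w ^ n else 1)"
        by (rule prod.cong) (auto simp: y_minus_x e_def)
      then show ?thesis by (simp add: g_def)
    qed
    ultimately have "((\<lambda>n. a (e n) * w ^ n) has_sum f y) UNIV"
      by (simp add: comp_def)
    then show ?thesis
      unfolding y_def by (rule has_sum_imp_sums)
  qed
  with r show ?thesis
    by (intro that[of r "\<lambda>n. a (e n)"])
qed

lemma mv_analytic_on_has_partials:
  assumes "mv_analytic_on f U" "x \<in> U"
  shows "has_partials f x"
  unfolding has_partials_def
proof
  fix \<alpha>
  obtain r c where r: "r > 0"
    and sums: "\<And>w. cmod w < r \<Longrightarrow> (\<lambda>n. c n * w ^ n) sums f (coord_upd x \<alpha> (x$\<alpha> + w))"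
    using mv_analytic_on_coord_sums[OF assms] by blast
  have "summable (\<lambda>n. c n * of_real (r/2) ^ n)"
    using sums[of "of_real (r/2)"] r by (auto simp: sums_summable)
  then have "((\<lambda>w. \<Sum>n. c n * w ^ n) has_field_derivative (\<Sum>n. diffs c n * 0 ^ n)) (at 0)"
    by (rule termdiffs_strong) (use r in simp)
  then have "((\<lambda>w. \<Sum>n. c n * w ^ n) has_field_derivative (\<Sum>n. diffs c n * 0 ^ n))
      (at (x$\<alpha> - x$\<alpha>))"
    by simp
  then have "((\<lambda>z. \<Sum>n. c n * (z - x$\<alpha>) ^ n) has_field_derivative (\<Sum>n. diffs c n * 0 ^ n) * 1)
      (at (x$\<alpha>))"
    by (rule DERIV_chain2) (auto intro!: derivative_eq_intros)
  then have "((\<lambda>z. f (coord_upd x \<alpha> z)) has_field_derivative (\<Sum>n. diffs c n * 0 ^ n) * 1)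
      (at (x$\<alpha>))"
  proof (rule has_field_derivative_transform_within_open)
    show "open (ball (x$\<alpha>) r)" "x$\<alpha> \<in> ball (x$\<alpha>) r"
      using r by simp_all
    fix z assume "z \<in> ball (x$\<alpha>) r"
    then have "cmod (z - x$\<alpha>) < r"
      by (simp add: dist_norm norm_minus_commute)
    from sums_unique[OF sums[OF this]] show "(\<Sum>n. c n * (z - x$\<alpha>) ^ n) = f (coord_upd x \<alpha> z)"
      by simp
  qed
  then show "(\<lambda>z. f (coord_upd x \<alpha> z)) field_differentiable at (x$\<alpha>)"
    by (auto simp: field_differentiable_def)
qed

definition mfun_has_partials :: "'n::finite mfun \<Rightarrow> complex^'n \<Rightarrow> bool" where
  "mfun_has_partials P x \<longleftrightarrow> (\<forall>i j. has_partials (\<lambda>y. P y $ i $ j) x)"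

lemma mfun_has_partials_const: "mfun_has_partials (\<lambda>y. c) x"
  unfolding mfun_has_partials_def by (auto intro!: has_partials_const)

lemma mfun_has_partials_add:
  "mfun_has_partials P x \<Longrightarrow> mfun_has_partials Q x \<Longrightarrow> mfun_has_partials (\<lambda>y. P y + Q y) x"
  unfolding mfun_has_partials_def by (auto intro!: has_partials_add)

lemma mfun_has_partials_diff:
  "mfun_has_partials P x \<Longrightarrow> mfun_has_partials Q x \<Longrightarrow> mfun_has_partials (\<lambda>y. P y - Q y) x"
  unfolding mfun_has_partials_def by (auto intro!: has_partials_diff)

lemma mfun_has_partials_mult:
  "mfun_has_partials P x \<Longrightarrow> mfun_has_partials Q x \<Longrightarrow> mfun_has_partials (\<lambda>y. P y ** Q y) x"
  unfolding mfun_has_partials_def matrix_matrix_mult_def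
  by (auto intro!: has_partials_sum has_partials_mult)

lemma mfun_has_partials_sum:
  "finite S \<Longrightarrow> (\<And>i. i \<in> S \<Longrightarrow> mfun_has_partials (f i) x) \<Longrightarrow>
    mfun_has_partials (\<lambda>y. \<Sum>i\<in>S. f i y) x"
  by (induction S rule: finite_induct) (auto intro: mfun_has_partials_add mfun_has_partials_const)

lemma mderiv_const: "mderiv \<alpha> (\<lambda>y. c) x = 0"
  by (simp add: mderiv_def pdx_const vec_eq_iff)

lemma mderiv_add:
  "mfun_has_partials P x \<Longrightarrow> mfun_has_partials Q x \<Longrightarrow>
    mderiv \<alpha> (\<lambda>y. P y + Q y) x = mderiv \<alpha> P x + mderiv \<alpha> Q x"
  unfolding mderiv_def mfun_has_partials_def by (simp add: vec_eq_iff pdx_add)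

lemma mderiv_diff:
  "mfun_has_partials P x \<Longrightarrow> mfun_has_partials Q x \<Longrightarrow>
    mderiv \<alpha> (\<lambda>y. P y - Q y) x = mderiv \<alpha> P x - mderiv \<alpha> Q x"
  unfolding mderiv_def mfun_has_partials_def by (simp add: vec_eq_iff pdx_diff)

lemma mderiv_sum:
  "finite S \<Longrightarrow> (\<And>i. i \<in> S \<Longrightarrow> mfun_has_partials (f i) x) \<Longrightarrow>
    mderiv \<alpha> (\<lambda>y. \<Sum>i\<in>S. f i y) x = (\<Sum>i\<in>S. mderiv \<alpha> (f i) x)"
  by (induction S rule: finite_induct) (simp_all add: mderiv_const mderiv_add mfun_has_partials_sum)

lemma mderiv_mult:
  assumes "mfun_has_partials P x" "mfun_has_partials Q x"
  shows "mderiv \<alpha> (\<lambda>y. P y ** Q y) x = mderiv \<alpha> P x ** Q x + P x ** mderiv \<alpha> Q x"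
proof -
  have P: "has_partials (\<lambda>y. P y $ i $ l) x" and Q: "has_partials (\<lambda>y. Q y $ i $ l) x" for i l
    using assms by (simp_all add: mfun_has_partials_def)
  have "pdx \<alpha> (\<lambda>y. \<Sum>l\<in>UNIV. P y $ i $ l * Q y $ l $ j) x
      = (\<Sum>l\<in>UNIV. pdx \<alpha> (\<lambda>y. P y $ i $ l) x * Q x $ l $ j + P x $ i $ l * pdx \<alpha> (\<lambda>y. Q y $ l $ j) x)"
    for i j
    by (simp add: pdx_sum has_partials_mult P Q pdx_mult add.commute)
  then show ?thesis
    by (simp add: mderiv_def matrix_matrix_mult_def vec_eq_iff sum.distrib)
qed

lemma mderiv_local:
  assumes "open U" "x \<in> U" "\<And>y. y \<in> U \<Longrightarrow> P y = Q y"
  shows "mderiv \<alpha> P x = mderiv \<alpha> Q x"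
proof -
  have "pdx \<alpha> (\<lambda>y. P y $ i $ j) x = pdx \<alpha> (\<lambda>y. Q y $ i $ j) x" for i j
    by (rule pdx_local[OF assms(1,2)]) (simp add: assms(3))
  then show ?thesis
    by (simp add: mderiv_def vec_eq_iff)
qed

definition lser_has_partials :: "'n::finite lser \<Rightarrow> complex^'n \<Rightarrow> bool" where
  "lser_has_partials A x \<longleftrightarrow> (\<forall>k. mfun_has_partials (A k) x)"

lemma lser_has_partials_power_ser: "power_ser U A \<Longrightarrow> x \<in> U \<Longrightarrow> lser_has_partials A x"
  unfolding lser_has_partials_def mfun_has_partials_def power_ser_def ser_analytic_def
  using mv_analytic_on_has_partials by blast

lemma lser_has_partials_lmul [simp]:
  assumes "bounded_below A" "bounded_below B" "lser_has_partials A x" "lser_has_partials B x"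
  shows "lser_has_partials (lmul A B) x"
proof -
  obtain a b where ab: "vanishes_below A a" "vanishes_below B b"
    using assms(1,2) by (auto simp: bounded_below_def)
  have "lmul A B k = (\<lambda>y. \<Sum>i=a..k-b. A i y ** B (k-i) y)" for k
    by (simp add: fun_eq_iff lmul_eq_sum[OF ab])
  moreover have "mfun_has_partials (\<lambda>y. \<Sum>i=a..k-b. A i y ** B (k-i) y) x" for k
    using assms(3,4)
    by (auto simp: lser_has_partials_def intro!: mfun_has_partials_sum mfun_has_partials_mult)
  ultimately show ?thesis
    by (simp add: lser_has_partials_def)
qed

lemma lser_has_partials_lsub [simp]:
  "lser_has_partials A x \<Longrightarrow> lser_has_partials B x \<Longrightarrow> lser_has_partials (lsub A B) x"
  unfolding lser_has_partials_def lsub_def by (auto intro: mfun_has_partials_diff)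

lemma lser_has_partials_trunc [simp]: "lser_has_partials A x \<Longrightarrow> lser_has_partials (trunc A) x"
proof -
  have "trunc A k = (if k \<le> -1 then A k else (\<lambda>y. 0))" for k
    by (auto simp: trunc_def)
  then show "lser_has_partials A x \<Longrightarrow> lser_has_partials (trunc A) x"
    by (simp add: lser_has_partials_def mfun_has_partials_const)
qed

lemma lser_has_partials_cser [simp]: "lser_has_partials (cser b) x"
  unfolding lser_has_partials_def cser_def by (simp add: mfun_has_partials_const)

lemma vanishes_below_ld: "vanishes_below A a \<Longrightarrow> vanishes_below (ld \<alpha> A) a"
  by (simp add: vanishes_below_def ld_def mderiv_const flip: fun_eq_iff)

lemma bounded_below_ld [simp]: "bounded_below A \<Longrightarrow> bounded_below (ld \<alpha> A)"
  unfolding bounded_below_def using vanishes_below_ld by blast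

lemma ld_zero [simp]: "ld \<alpha> (\<lambda>k x. 0) = (\<lambda>k x. 0)"
  and ld_lone [simp]: "ld \<alpha> lone = (\<lambda>k x. 0)"
  and ld_cser [simp]: "ld \<alpha> (cser b) = (\<lambda>k x. 0)"
  by (auto simp: ld_def lone_def cser_def mderiv_const fun_eq_iff)

lemma ld_trunc [simp]: "ld \<alpha> (trunc A) = trunc (ld \<alpha> A)"
  by (auto simp: ld_def trunc_def mderiv_const fun_eq_iff)

lemma ld_local:
  assumes "open U" "x \<in> U" "\<And>y k. y \<in> U \<Longrightarrow> A k y = B k y"
  shows "ld \<alpha> A k x = ld \<alpha> B k x"
  unfolding ld_def by (rule mderiv_local[OF assms(1,2)]) (use assms(3) in auto)

lemma ld_lmul:
  assumes "bounded_below A" "bounded_below B" "lser_has_partials A x" "lser_has_partials B x"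
  shows "ld \<alpha> (lmul A B) k x = ladd (lmul (ld \<alpha> A) B) (lmul A (ld \<alpha> B)) k x"
proof -
  obtain a b where ab: "vanishes_below A a" "vanishes_below B b"
    using assms(1,2) by (auto simp: bounded_below_def)
  have parts: "mfun_has_partials (A i) x" "mfun_has_partials (B i) x" for i
    using assms(3,4) by (auto simp: lser_has_partials_def)
  have "lmul A B k = (\<lambda>y. \<Sum>i=a..k-b. A i y ** B (k-i) y)"
    by (simp add: fun_eq_iff lmul_eq_sum[OF ab])
  then have "ld \<alpha> (lmul A B) k x = (\<Sum>i=a..k-b. mderiv \<alpha> (\<lambda>y. A i y ** B (k-i) y) x)"
    by (simp add: ld_def mderiv_sum mfun_has_partials_mult parts)
  also have "\<dots> = (\<Sum>i=a..k-b. ld \<alpha> A i x ** B (k-i) x + A i x ** ld \<alpha> B (k-i) x)"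
    by (simp add: ld_def mderiv_mult parts)
  also have "\<dots> = ladd (lmul (ld \<alpha> A) B) (lmul A (ld \<alpha> B)) k x"
    by (simp add: ladd_def sum.distrib lmul_eq_sum[OF vanishes_below_ld[OF ab(1)] ab(2)]
        lmul_eq_sum[OF ab(1) vanishes_below_ld[OF ab(2)]])
  finally show ?thesis .
qed

lemma fls_at_ld_lmul [simp]:
  assumes "bounded_below A" "bounded_below B" "lser_has_partials A x" "lser_has_partials B x"
  shows "fls_at (ld \<alpha> (lmul A B)) x = fls_at (ld \<alpha> A) x * fls_at B x + fls_at A x * fls_at (ld \<alpha> B) x"
proof -
  have "fls_at (ld \<alpha> (lmul A B)) x = fls_at (ladd (lmul (ld \<alpha> A) B) (lmul A (ld \<alpha> B))) x"
    by (rule fls_at_cong) (rule ld_lmul[OF assms])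
  then show ?thesis
    using assms by simp
qed

lemma fls_at_ld_lsub [simp]:
  assumes "bounded_below A" "bounded_below B" "lser_has_partials A x" "lser_has_partials B x"
  shows "fls_at (ld \<alpha> (lsub A B)) x = fls_at (ld \<alpha> A) x - fls_at (ld \<alpha> B) x"
proof -
  have "fls_at (ld \<alpha> (lsub A B)) x = fls_at (lsub (ld \<alpha> A) (ld \<alpha> B)) x"
    using assms(3,4) by (intro fls_at_cong) (simp add: ld_def lsub_def mderiv_diff lser_has_partials_def)
  then show ?thesis
    using assms by simp
qed

lemma fls_at_ld_lbr [simp]:
  "bounded_below A \<Longrightarrow> bounded_below B \<Longrightarrow> lser_has_partials A x \<Longrightarrow> lser_has_partials B x \<Longrightarrow>
    fls_at (ld \<alpha> (lbr A B)) x
      = commutator (fls_at (ld \<alpha> A) x) (fls_at B x) + commutator (fls_at A x) (fls_at (ld \<alpha> B) x)"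
  by (simp add: lbr_def commutator_def)

lemma fls_at_ld_local:
  "open U \<Longrightarrow> x \<in> U \<Longrightarrow> (\<And>y k. y \<in> U \<Longrightarrow> A k y = B k y) \<Longrightarrow> fls_at (ld \<alpha> A) x = fls_at (ld \<alpha> B) x"
  by (intro fls_at_cong ld_local)


section \<open>Ring identities behind the flows\<close>

lemma derivative_of_inverse:
  fixes t ti t' ti' :: "'a::ring_1"
  assumes "t * ti = 1" and "ti' * t + ti * t' = 0"
  shows "ti' = - (ti * t' * ti)"
proof -
  have "ti' = ti' * t * ti"
    using assms(1) by (simp add: mult.assoc)
  also have "ti' * t = - (ti * t')"
    using assms(2) by (simp add: eq_neg_iff_add_eq_0)
  finally show ?thesis
    by simp
qed

text \<open>When \<open>T\<close> varies by \<open>v\<close> and \<open>A\<close> by \<open>f = [q, A] - \<partial>q\<close>, the potential \<open>h = T\<inverse> \<partial>T + T\<inverse> A T\<close>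
  varies by \<open>[h, X] + \<partial>X\<close> with \<open>X = T\<inverse> v - T\<inverse> q T\<close>; primes denote \<open>\<partial>\<close>.\<close>

lemma dressed_potential_variation:
  fixes t ti t' ti' v v' a q q' f :: "'a::ring_1"
  assumes "t * ti = 1" "ti * t = 1" "ti' = - (ti * t' * ti)" "f = commutator q a - q'"
  shows "0 - ti * v * ti * t' + ti * v' + (0 - ti * v * ti * a * t) + ti * f * t + ti * a * v
    = commutator (ti * t' + ti * (a * t)) (ti * v - ti * (q * t))
      + ((ti' * v + ti * v') - (ti' * (q * t) + ti * (q' * t + q * t')))"
proof -
  have r: "t * (ti * z) = z" and l: "ti * (t * z) = z" for z
    using assms(1,2) by (simp_all flip: mult.assoc)
  show ?thesis
    by (simp add: assms(3,4) commutator_def algebra_simps r l assms(1,2))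
qed

text \<open>If \<open>v = q T + T X\<close> with \<open>X\<close> commuting with \<open>b\<close>, then \<open>T b T\<inverse>\<close> varies by \<open>[q, T b T\<inverse>]\<close>.\<close>

lemma conjugate_variation:
  fixes t ti v q b X :: "'a::ring_1"
  assumes "t * ti = 1" "ti * t = 1" "X = ti * v - ti * (q * t)" "X * b = b * X"
  shows "v * b * ti - t * b * ti * v * ti = commutator q (t * b * ti)"
proof -
  have r: "t * (ti * z) = z" and l: "ti * (t * z) = z" for z
    using assms(1,2) by (simp_all flip: mult.assoc)
  have v: "v = t * X + q * t"
    by (simp add: assms(3) algebra_simps r)
  have "v * b * ti - t * b * ti * v * ti - commutator q (t * b * ti) = t * (X * b - b * X) * ti"
    by (simp add: v commutator_def algebra_simps l assms(1))
  then show ?thesis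
    using assms(4) by simp
qed

lemma commutator_conjugates:
  fixes t ti b1 b2 :: "'a::ring_1"
  assumes "ti * t = 1"
  shows "commutator (t * b1 * ti) (t * b2 * ti) = t * commutator b1 b2 * ti"
proof -
  have "ti * (t * z) = z" for z
    using assms by (simp flip: mult.assoc)
  then show ?thesis
    by (simp add: commutator_def algebra_simps)
qed

text \<open>\<open>lax_rhs a m d = [m\<^sub>\<le>\<^sub>-\<^sub>1, \<partial> + a]\<close> when \<open>d = \<partial>m\<close>.\<close>

definition lax_rhs :: "'a::ring_1 fls \<Rightarrow> 'a fls \<Rightarrow> 'a fls \<Rightarrow> 'a fls" where
  "lax_rhs a m d = commutator (fls_principal m) a - fls_principal d"

text \<open>The Rota--Baxter identity turns \<open>[m\<^sub>1, m\<^sub>2] = 0\<close> and its derivative into \<open>S1\<close> and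
  \<open>S2\<close> below, which cancel the zero-curvature terms; what is left is the Jacobi identity.\<close>

lemma lax_rhs_mixed_commute:
  fixes a m1 m2 d1 d2 :: "'a::ring_1 fls"
  assumes comm: "commutator m1 m2 = 0" and dcomm: "commutator d1 m2 + commutator m1 d2 = 0"
  shows "lax_rhs a (commutator (fls_principal m1) m2)
             (commutator (fls_principal d1) m2 + commutator (fls_principal m1) d2)
           + commutator (fls_principal m2) (lax_rhs a m1 d1)
       = lax_rhs a (commutator (fls_principal m2) m1)
             (commutator (fls_principal d2) m1 + commutator (fls_principal m2) d1)
           + commutator (fls_principal m1) (lax_rhs a m2 d2)"
proof -
  define n1 n2 e1 e2 where "n1 = fls_principal m1" and "n2 = fls_principal m2"
    and "e1 = fls_principal d1" and "e2 = fls_principal d2"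
  have S1: "fls_principal (commutator n1 m2)
      = fls_principal (commutator n2 m1) + commutator n1 n2"
  proof -
    have "fls_principal (commutator n1 m2) - (fls_principal (commutator n2 m1) + commutator n1 n2)
        = fls_principal (commutator m1 m2)"
      by (simp add: n1_def n2_def commutator_def algebra_simps
          fls_principal_mult[of m1 m2] fls_principal_mult[of m2 m1])
    then show ?thesis
      by (simp add: comm)
  qed
  have S2: "fls_principal (commutator e1 m2 + commutator n1 d2)
      = fls_principal (commutator e2 m1 + commutator n2 d1) + commutator e1 n2 + commutator n1 e2"
  proof -
    have "fls_principal (commutator e1 m2 + commutator n1 d2)
          - (fls_principal (commutator e2 m1 + commutator n2 d1) + commutator e1 n2 + commutator n1 e2)
        = fls_principal (commutator d1 m2 + commutator m1 d2)"
      by (simp add: n1_def n2_def e1_def e2_def commutator_def algebra_simps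
          fls_principal_mult[of d1 m2] fls_principal_mult[of m2 d1]
          fls_principal_mult[of m1 d2] fls_principal_mult[of d2 m1])
    then show ?thesis
      by (simp add: dcomm)
  qed
  show ?thesis
    unfolding lax_rhs_def n1_def[symmetric] n2_def[symmetric] e1_def[symmetric] e2_def[symmetric] S1 S2
    by (simp add: commutator_def algebra_simps)
qed


section \<open>Dressing and the induced variations\<close>

lemma fls_at_flowL [simp]:
  "bounded_below N \<Longrightarrow>
    fls_at (flowL C N \<alpha>) x = lax_rhs (fls_at (Lpot C \<alpha>) x) (fls_at N x) (fls_at (ld \<alpha> N) x)"
  by (simp add: flowL_def lax_rhs_def)

lemma bounded_below_flowL [simp]: "bounded_below N \<Longrightarrow> bounded_below (flowL C N \<alpha>)"
  by (simp add: flowL_def)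

lemma lbr_coeff_offdiag:
  assumes h: "bounded_below h" "\<forall>l < -1. h l x = 0" "\<forall>l. isdiag (h l x)"
    and X: "bounded_below X" "\<forall>l < k. isdiag (X l x)"
    and "i \<noteq> j"
  shows "lbr h X (k - 1) x $ i $ j = (h (-1) x $ i $ i - h (-1) x $ j $ j) * X k x $ i $ j"
proof -
  obtain H K where H: "vanishes_below h H" "H \<le> -1" and K: "vanishes_below X K" "K \<le> k"
    using h(1) X(1) vanishes_below_mono[of h _ "min _ (-1)"] vanishes_below_mono[of X _ "min _ k"]
    unfolding bounded_below_def by (meson min.cobounded1 min.cobounded2)
  define c where "c l = (h l x $ i $ i - h l x $ j $ j) * X (k - 1 - l) x $ i $ j" for l
  have "lbr h X (k - 1) x $ i $ j = (\<Sum>l=H..k-1-K. c l)"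
    unfolding lbr_def lsub_def lmul_eq_sum[OF H(1) K(1)] lmul_eq_sum_flip[OF K(1) H(1)] c_def
    using h(3) by (simp add: isdiag_mult_left isdiag_mult_right sum_subtractf algebra_simps)
  also have "\<dots> = sum c {-1}"
  proof (rule sum.mono_neutral_right)
    show "\<forall>l\<in>{H..k-1-K} - {-1}. c l = 0"
    proof
      fix l assume "l \<in> {H..k-1-K} - {-1}"
      then consider "l < -1" | "k - 1 - l < k" by fastforce
      then show "c l = 0"
        using h(2) X(2) \<open>i \<noteq> j\<close> by cases (auto simp: c_def isdiag_def)
    qed
  qed (use H K in auto)
  finally show ?thesis
    by (simp add: c_def)
qed

lemma isdiag_ld:
  assumes "open U" "x \<in> U" "\<forall>y\<in>U. isdiag (A k y)"
  shows "isdiag (ld \<alpha> A k x)"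
proof -
  have "pdx \<alpha> (\<lambda>y. A k y $ i $ j) x = pdx \<alpha> (\<lambda>y. 0) x" if "i \<noteq> j" for i j
    by (rule pdx_local[OF assms(1,2)]) (use assms(3) that in \<open>auto simp: isdiag_def\<close>)
  then show ?thesis
    by (simp add: isdiag_def ld_def mderiv_def pdx_const)
qed

lemma leading_span_separates:
  fixes C :: "'n::finite \<Rightarrow> 'n mfun"
  assumes "leading_span U C T Ti" "x \<in> U" "i \<noteq> j"
  shows "\<exists>\<alpha>. hser C T Ti \<alpha> (-1) x $ i $ i \<noteq> hser C T Ti \<alpha> (-1) x $ j $ j"
proof (rule ccontr)
  assume "\<not> ?thesis"
  then have eq: "hser C T Ti \<alpha> (-1) x $ i $ i = hser C T Ti \<alpha> (-1) x $ j $ j" for \<alpha>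
    by auto
  define D :: "complex^'n^'n" where "D = (\<chi> p q. if p = i \<and> q = i then 1 else 0)"
  have "isdiag D"
    by (simp add: D_def isdiag_def)
  then obtain c where "D = (\<chi> p q. \<Sum>\<alpha>\<in>UNIV. c \<alpha> * hser C T Ti \<alpha> (-1) x $ p $ q)"
    using assms(1,2) unfolding leading_span_def by blast
  then have "D $ i $ i = D $ j $ j"
    by (simp add: eq)
  then show False
    using assms(3) by (simp add: D_def)
qed

text \<open>\<open>gauge_part T Ti M dT\<close> is the \<open>X\<close> in \<open>dT = M\<^sub>\<le>\<^sub>-\<^sub>1 T + T X\<close>: the infinitesimal form of the
  freedom \<open>T \<mapsto> T D\<close> with \<open>D\<close> diagonal.\<close>

definition gauge_part :: "'n::finite lser \<Rightarrow> 'n lser \<Rightarrow> 'n lser \<Rightarrow> 'n lser \<Rightarrow> 'n lser" where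
  "gauge_part T Ti M dT = lsub (lmul Ti dT) (lmul Ti (lmul (trunc M) T))"

context
  fixes U :: "(complex^'n::finite) set" and C :: "'n \<Rightarrow> 'n mfun" and T Ti :: "'n lser"
  assumes U: "open U" and dr: "dressing U C T Ti"
begin

lemma dressing_bounded_below [simp]: "bounded_below T" "bounded_below Ti"
  using dr bounded_below_power_ser by (auto simp: dressing_def)

lemma dressing_has_partials [simp]: "x \<in> U \<Longrightarrow> lser_has_partials T x" "x \<in> U \<Longrightarrow> lser_has_partials Ti x"
  using dr lser_has_partials_power_ser by (auto simp: dressing_def)

lemma dressing_inverse: "x \<in> U \<Longrightarrow> fls_at T x * fls_at Ti x = 1" "x \<in> U \<Longrightarrow> fls_at Ti x * fls_at T x = 1"
proof -
  assume x: "x \<in> U"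
  have "fls_at (lmul T Ti) x = fls_at lone x" "fls_at (lmul Ti T) x = fls_at lone x"
    by (rule fls_at_cong, use dr x in \<open>simp add: dressing_def\<close>)+
  then show "fls_at T x * fls_at Ti x = 1" "fls_at Ti x * fls_at T x = 1"
    by simp_all
qed

lemma dressing_ld_inverse:
  assumes x: "x \<in> U"
  shows "fls_at (ld \<alpha> Ti) x = - (fls_at Ti x * fls_at (ld \<alpha> T) x * fls_at Ti x)"
proof (rule derivative_of_inverse)
  show "fls_at T x * fls_at Ti x = 1"
    using dressing_inverse[OF x] by simp
  have "fls_at (ld \<alpha> (lmul Ti T)) x = fls_at (ld \<alpha> lone) x"
    using dr by (intro fls_at_ld_local[OF U x]) (auto simp: dressing_def)
  then show "fls_at (ld \<alpha> Ti) x * fls_at T x + fls_at Ti x * fls_at (ld \<alpha> T) x = 0"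
    using x by simp
qed

lemma var_h_eq_gauge_part:
  assumes M: "bounded_below M" "lser_has_partials M x" and dT: "power_ser U dT" and x: "x \<in> U"
  shows "var_h C T Ti dT (flowL C M) \<alpha> k x
    = ladd (lbr (hser C T Ti \<alpha>) (gauge_part T Ti M dT)) (ld \<alpha> (gauge_part T Ti M dT)) k x"
proof -
  have [simp]: "bounded_below dT" "lser_has_partials dT x"
    using bounded_below_power_ser[OF dT] lser_has_partials_power_ser[OF dT x] .
  show ?thesis
  proof (rule fls_at_eqD)
    show "fls_at (var_h C T Ti dT (flowL C M) \<alpha>) x
      = fls_at (ladd (lbr (hser C T Ti \<alpha>) (gauge_part T Ti M dT)) (ld \<alpha> (gauge_part T Ti M dT))) x"
      using dressed_potential_variation[OF dressing_inverse[OF x] dressing_ld_inverse[OF x, of \<alpha>]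
          lax_rhs_def[of "fls_at (Lpot C \<alpha>) x" "fls_at M x" "fls_at (ld \<alpha> M) x"],
          where v = "fls_at dT x" and v' = "fls_at (ld \<alpha> dT) x"] M x
      by (simp add: var_h_def hser_def gauge_part_def)
  qed (use M in \<open>simp_all add: var_h_def hser_def gauge_part_def\<close>)
qed

lemma gauge_part_isdiag_step:
  assumes ls: "leading_span U C T Ti"
    and M: "bounded_below M" "\<And>y. y \<in> U \<Longrightarrow> lser_has_partials M y" and dT: "power_ser U dT"
    and var: "\<And>\<alpha>. in_hdiag U (var_h C T Ti dT (flowL C M) \<alpha>)"
    and below: "\<forall>y\<in>U. \<forall>l<k. isdiag (gauge_part T Ti M dT l y)"
    and x: "x \<in> U"
  shows "isdiag (gauge_part T Ti M dT k x)"
  unfolding isdiag_def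
proof (intro allI impI)
  fix i j :: 'n
  assume "i \<noteq> j"
  define X where "X = gauge_part T Ti M dT"
  have bX: "bounded_below X"
    using M(1) dT by (simp add: X_def gauge_part_def bounded_below_power_ser)
  have "(hser C T Ti \<alpha> (-1) x $ i $ i - hser C T Ti \<alpha> (-1) x $ j $ j) * X k x $ i $ j = 0" for \<alpha>
  proof -
    have h: "\<forall>l < -1. hser C T Ti \<alpha> l x = 0" "\<forall>l. isdiag (hser C T Ti \<alpha> l x)"
      using dr x by (simp_all add: dressing_def in_hdiag_def)
    have "(hser C T Ti \<alpha> (-1) x $ i $ i - hser C T Ti \<alpha> (-1) x $ j $ j) * X k x $ i $ j
        = lbr (hser C T Ti \<alpha>) X (k - 1) x $ i $ j"
      using below x \<open>i \<noteq> j\<close> bX h by (simp add: lbr_coeff_offdiag hser_def X_def)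
    also have "\<dots> = var_h C T Ti dT (flowL C M) \<alpha> (k - 1) x $ i $ j - ld \<alpha> X (k - 1) x $ i $ j"
      using var_h_eq_gauge_part[OF M(1) M(2)[OF x] dT x] by (simp add: X_def ladd_def)
    also have "\<dots> = 0"
      using var[of \<alpha>] isdiag_ld[OF U x, of X "k - 1"] below x \<open>i \<noteq> j\<close>
      by (simp add: X_def in_hdiag_def isdiag_def)
    finally show ?thesis .
  qed
  then show "gauge_part T Ti M dT k x $ i $ j = 0"
    using leading_span_separates[OF ls x \<open>i \<noteq> j\<close>] by (auto simp: X_def)
qed

lemma gauge_part_isdiag:
  assumes ls: "leading_span U C T Ti"
    and M: "bounded_below M" "\<And>y. y \<in> U \<Longrightarrow> lser_has_partials M y" and dT: "power_ser U dT"
    and var: "\<And>\<alpha>. in_hdiag U (var_h C T Ti dT (flowL C M) \<alpha>)"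
    and x: "x \<in> U"
  shows "isdiag (gauge_part T Ti M dT k x)"
proof -
  have "bounded_below (gauge_part T Ti M dT)"
    using M(1) dT by (simp add: gauge_part_def bounded_below_power_ser)
  then obtain K where K: "vanishes_below (gauge_part T Ti M dT) K"
    by (auto simp: bounded_below_def)
  have "\<forall>y\<in>U. \<forall>l < K + int m. isdiag (gauge_part T Ti M dT l y)" for m
  proof (induction m)
    case 0
    then show ?case
      using K by (simp add: vanishes_below_def isdiag_def)
  next
    case (Suc m)
    then have new: "isdiag (gauge_part T Ti M dT (K + int m) y)" if "y \<in> U" for y
      using gauge_part_isdiag_step[OF ls M dT var _ that] by blast
    show ?case
    proof (intro ballI allI impI)
      fix y l
      assume "y \<in> U" "l < K + int (Suc m)"
      then consider "l < K + int m" | "l = K + int m"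
        by linarith
      then show "isdiag (gauge_part T Ti M dT l y)"
        using Suc \<open>y \<in> U\<close> new by cases blast+
    qed
  qed
  from this[of "nat (k - K + 1)"] x show ?thesis
    by simp
qed

lemma var_M_eq_lbr:
  assumes ls: "leading_span U C T Ti" and bi: "diag_laurent bi" and bj: "diag_laurent bj"
    and dv: "dressing_variation U C T Ti (flowL C (Mser T Ti bi)) dT" and x: "x \<in> U"
  shows "var_M T Ti bj dT k x = lbr (trunc (Mser T Ti bi)) (Mser T Ti bj) k x"
proof -
  have dT: "power_ser U dT" and var: "\<And>\<alpha>. in_hdiag U (var_h C T Ti dT (flowL C (Mser T Ti bi)) \<alpha>)"
    using dv by (auto simp: dressing_variation_def)
  have [simp]: "bounded_below dT" "bounded_below (cser bi)" "bounded_below (cser bj)"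
    using bounded_below_power_ser[OF dT] bounded_below_cser[OF bi] bounded_below_cser[OF bj] .
  have "isdiag (gauge_part T Ti (Mser T Ti bi) dT l x)" for l
    using dT var x by (intro gauge_part_isdiag[OF ls]) (simp_all add: Mser_def)
  moreover have "isdiag (cser bj l x)" for l
    using bj by (simp add: diag_laurent_def cser_def)
  ultimately have "fls_at (gauge_part T Ti (Mser T Ti bi) dT) x * fls_at (cser bj) x
      = fls_at (cser bj) x * fls_at (gauge_part T Ti (Mser T Ti bi) dT) x"
    by (intro fls_at_mult_commute_isdiag) (simp_all add: gauge_part_def Mser_def)
  then have "fls_at (var_M T Ti bj dT) x = fls_at (lbr (trunc (Mser T Ti bi)) (Mser T Ti bj)) x"
    using conjugate_variation[OF dressing_inverse[OF x]] by (simp add: var_M_def Mser_def gauge_part_def)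
  then show ?thesis
    by (rule fls_at_eqD[rotated 2]) (simp_all add: var_M_def Mser_def)
qed

lemma bounded_below_Mser [simp]: "diag_laurent b \<Longrightarrow> bounded_below (Mser T Ti b)"
  by (simp add: Mser_def bounded_below_cser)

lemma lser_has_partials_Mser [simp]:
  "diag_laurent b \<Longrightarrow> x \<in> U \<Longrightarrow> lser_has_partials (Mser T Ti b) x"
  by (simp add: Mser_def bounded_below_cser)

lemma bounded_below_mixed_second:
  "diag_laurent bi \<Longrightarrow> diag_laurent bj \<Longrightarrow> power_ser U dT \<Longrightarrow>
    bounded_below (mixed_second C T Ti bi bj dT \<alpha>)"
  by (simp add: mixed_second_def var_M_def bounded_below_cser bounded_below_power_ser)

lemma fls_at_mixed_second:
  assumes ls: "leading_span U C T Ti" and bi: "diag_laurent bi" and bj: "diag_laurent bj"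
    and dv: "dressing_variation U C T Ti (flowL C (Mser T Ti bi)) dT" and x: "x \<in> U"
  shows "fls_at (mixed_second C T Ti bi bj dT \<alpha>) x
    = lax_rhs (fls_at (Lpot C \<alpha>) x)
        (commutator (fls_principal (fls_at (Mser T Ti bi) x)) (fls_at (Mser T Ti bj) x))
        (commutator (fls_principal (fls_at (ld \<alpha> (Mser T Ti bi)) x)) (fls_at (Mser T Ti bj) x)
          + commutator (fls_principal (fls_at (Mser T Ti bi) x)) (fls_at (ld \<alpha> (Mser T Ti bj)) x))
      + commutator (fls_principal (fls_at (Mser T Ti bj) x))
          (lax_rhs (fls_at (Lpot C \<alpha>) x) (fls_at (Mser T Ti bi) x) (fls_at (ld \<alpha> (Mser T Ti bi)) x))"
proof -
  have "power_ser U dT"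
    using dv by (simp add: dressing_variation_def)
  then have [simp]: "bounded_below (var_M T Ti bj dT)"
    using bj by (simp add: var_M_def bounded_below_cser bounded_below_power_ser)
  have "fls_at (var_M T Ti bj dT) x = fls_at (lbr (trunc (Mser T Ti bi)) (Mser T Ti bj)) x"
    using var_M_eq_lbr[OF ls bi bj dv x] by (rule fls_at_cong)
  moreover have "fls_at (ld \<alpha> (var_M T Ti bj dT)) x
      = fls_at (ld \<alpha> (lbr (trunc (Mser T Ti bi)) (Mser T Ti bj))) x"
    using var_M_eq_lbr[OF ls bi bj dv] by (rule fls_at_ld_local[OF U x])
  ultimately show ?thesis
    using bi bj x by (simp add: mixed_second_def)
qed

lemma Mser_commute:
  assumes "diag_laurent b1" "diag_laurent b2" "x \<in> U"
  shows "lbr (Mser T Ti b1) (Mser T Ti b2) k x = 0"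
proof -
  have [simp]: "bounded_below (cser b1)" "bounded_below (cser b2)"
    using assms(1,2) by (simp_all add: bounded_below_cser)
  have "fls_at (cser b1) x * fls_at (cser b2) x = fls_at (cser b2) x * fls_at (cser b1) x"
    using assms(1,2)
    by (intro fls_at_mult_commute_isdiag[OF bounded_below_cser bounded_below_cser])
      (simp_all add: diag_laurent_def cser_def)
  then have "fls_at (lbr (Mser T Ti b1) (Mser T Ti b2)) x = fls_at (\<lambda>k x. 0) x"
    using commutator_conjugates[OF dressing_inverse(2)[OF assms(3)]]
    by (simp add: Mser_def commutator_def)
  then show ?thesis
    by (rule fls_at_eqD[rotated 2]) (simp_all add: Mser_def)
qed

lemma fls_at_Mser_commute:
  assumes b1: "diag_laurent b1" and b2: "diag_laurent b2" and x: "x \<in> U"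
  shows "commutator (fls_at (Mser T Ti b1) x) (fls_at (Mser T Ti b2) x) = 0"
    and "commutator (fls_at (ld \<alpha> (Mser T Ti b1)) x) (fls_at (Mser T Ti b2) x)
      + commutator (fls_at (Mser T Ti b1) x) (fls_at (ld \<alpha> (Mser T Ti b2)) x) = 0"
proof -
  have "fls_at (lbr (Mser T Ti b1) (Mser T Ti b2)) x = fls_at (\<lambda>k x. 0) x"
    using Mser_commute[OF b1 b2 x] by (rule fls_at_cong)
  then show "commutator (fls_at (Mser T Ti b1) x) (fls_at (Mser T Ti b2) x) = 0"
    using b1 b2 by simp
  have "fls_at (ld \<alpha> (lbr (Mser T Ti b1) (Mser T Ti b2))) x = fls_at (ld \<alpha> (\<lambda>k x. 0)) x"
    using Mser_commute[OF b1 b2] by (rule fls_at_ld_local[OF U x])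
  then show "commutator (fls_at (ld \<alpha> (Mser T Ti b1)) x) (fls_at (Mser T Ti b2) x)
      + commutator (fls_at (Mser T Ti b1) x) (fls_at (ld \<alpha> (Mser T Ti b2)) x) = 0"
    using b1 b2 x by simp
qed

end

theorem mainTheorem9:
  fixes U :: "(complex^'n::finite) set"
    and C :: "'n \<Rightarrow> 'n mfun"
    and T Ti dT1 dT2 :: "'n lser"
    and b1 b2 :: "int \<Rightarrow> complex^'n^'n"
  assumes "open U"
    and "\<forall>\<alpha> i j. mv_analytic_on (\<lambda>x. C \<alpha> x $ i $ j) U"
    and "commuting_family U C"
    and "dressing U C T Ti"
    and "leading_span U C T Ti"
    and "diag_laurent b1" and "diag_laurent b2"
    and "dressing_variation U C T Ti (flowL C (Mser T Ti b1)) dT1"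
    and "dressing_variation U C T Ti (flowL C (Mser T Ti b2)) dT2"
  shows "\<forall>\<alpha>. \<forall>x\<in>U. \<forall>k.
           mixed_second C T Ti b1 b2 dT1 \<alpha> k x = mixed_second C T Ti b2 b1 dT2 \<alpha> k x"
proof (intro allI ballI)
  fix \<alpha> x k
  assume x: "x \<in> U"
  note U = assms(1) and dr = assms(4) and ls = assms(5) and b = assms(6,7)
    and dv = assms(8,9)
  have "fls_at (mixed_second C T Ti b1 b2 dT1 \<alpha>) x = fls_at (mixed_second C T Ti b2 b1 dT2 \<alpha>) x"
    unfolding fls_at_mixed_second[OF U dr ls b dv(1) x] fls_at_mixed_second[OF U dr ls b(2,1) dv(2) x]
    by (rule lax_rhs_mixed_commute[OF fls_at_Mser_commute[OF U dr b x]])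
  moreover have "power_ser U dT1" "power_ser U dT2"
    using dv by (simp_all add: dressing_variation_def)
  ultimately show "mixed_second C T Ti b1 b2 dT1 \<alpha> k x = mixed_second C T Ti b2 b1 dT2 \<alpha> k x"
    using b by (intro fls_at_eqD) (simp_all add: bounded_below_mixed_second[OF U dr])
qed

end
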